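(* The competitive ratio of every Move-To-Front-Every-Other-Access algorithm (for any choice of initial bits) is exactly $2.5$ (full cost model): $2.5$ is the infimum of the constants $c$ for which there exists $b$ with $A(\sigma)\le c\cdot\mathrm{OPT}(\sigma)+b$ for all request sequences $\sigma$.
   Context: Static list update: a list of $l$ distinct items in some initial order; serving a request to the item at position $i$ (from the front) costs $i$ (full cost model); the accessed item may be moved closer to the front for free (free exchange); two adjacent items may be swapped at cost $1$ (paid exchange). $A(\sigma)$ is the total cost of algorithm $A$ and $\mathrm{OPT}(\sigma)$ the minimum cost of any offline algorithm from the same initial list. The constant $b$ may depend on the list length but not on $\sigma$. A Move-To-Front-Every-Other-Access (MTF2) algorithm maintains one bit per item, with arbitrary initial values; on each request to an item $z$ it flips the bit of $z$, and if the bit becomes $0$ it moves $z$ to the front (free exchange), otherwise it leaves the list unchanged; it makes no paid exchanges. *)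

theory Defs
  imports Complex_Main
begin

text \<open>Position of an item in a list, counted from 0 (the cost of accessing it is pos + 1).\<close>
fun pos :: "'a \<Rightarrow> 'a list \<Rightarrow> nat" where
  "pos x [] = 0"
| "pos x (y # ys) = (if x = y then 0 else Suc (pos x ys))"

definition swap :: "nat \<Rightarrow> 'a list \<Rightarrow> 'a list" where
  "swap i xs = xs[i := xs ! Suc i, Suc i := xs ! i]"

text \<open>Free exchange: move item x to position q (meant for q no larger than its current position).\<close>
definition move_to :: "nat \<Rightarrow> 'a \<Rightarrow> 'a list \<Rightarrow> 'a list" where
  "move_to q x xs = take q (remove1 x xs) @ x # drop q (remove1 x xs)"

inductive paid :: "'a list \<Rightarrow> 'a list \<Rightarrow> nat \<Rightarrow> bool" where
  paid_refl: "paid xs xs 0"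
| paid_step: "paid xs ys k \<Longrightarrow> Suc i < length ys \<Longrightarrow> paid xs (swap i ys) (Suc k)"

inductive offline :: "'a list \<Rightarrow> 'a list \<Rightarrow> nat \<Rightarrow> bool" where
  off_nil: "offline xs [] 0"
| off_cons: "paid xs ys k \<Longrightarrow> r \<in> set ys \<Longrightarrow> q \<le> pos r ys \<Longrightarrow>
     offline (move_to q r ys) rs c \<Longrightarrow> offline xs (r # rs) (k + (pos r ys + 1) + c)"

definition OPT :: "'a list \<Rightarrow> 'a list \<Rightarrow> nat" where
  "OPT xs rs = Inf {c. offline xs rs c}"

text \<open>Cost of MTF2 with current bit vector b (False = bit 0, True = bit 1) on list xs.
  On request z the bit of z is flipped; if it becomes 0, z is moved to the front.\<close>
fun mtf2_cost :: "('a \<Rightarrow> bool) \<Rightarrow> 'a list \<Rightarrow> 'a list \<Rightarrow> nat" where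
  "mtf2_cost b xs [] = 0"
| "mtf2_cost b xs (z # zs) =
     pos z xs + 1 +
     (let b' = b(z := \<not> b z) in mtf2_cost b' (if b' z then xs else move_to 0 z xs) zs)"

definition MTF2 :: "('a list \<Rightarrow> 'a \<Rightarrow> bool) \<Rightarrow> 'a list \<Rightarrow> 'a list \<Rightarrow> nat" where
  "MTF2 init xs rs = mtf2_cost (init xs) xs rs"

definition competitive :: "(nat list \<Rightarrow> nat list \<Rightarrow> nat) \<Rightarrow> real \<Rightarrow> bool" where
  "competitive A c \<longleftrightarrow>
     (\<forall>l. \<exists>b::real. \<forall>xs rs. distinct xs \<and> length xs = l \<and> set rs \<subseteq> set xs \<longrightarrow>
        real (A xs rs) \<le> c * real (OPT xs rs) + b)"

definition competitive_ratio :: "(nat list \<Rightarrow> nat list \<Rightarrow> nat) \<Rightarrow> real" where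
  "competitive_ratio A = Inf {c. competitive A c}"

end

theory Submission
  imports Defs
begin

(* Upper bound, by a potential function.  For an ordered pair (x, y) of distinct items a weight
   D in {0..5} is read off a table from the bits of x and y and from whether y precedes x in the
   list L of MTF2 and in the list M of an offline algorithm; Phi is the sum of these weights, so
   0 <= Phi <= 5 l^2.  A paid exchange changes the relative order of one pair only and raises Phi
   by at most 10; a request to r followed by the offline free move only affects pairs containing r,
   and the table gives 4 * (MTF2 cost) + (change of Phi) <= 10 * (offline cost).  Summing along an
   optimal offline schedule: 4 MTF2 <= 10 OPT + 5 l^2.

   Lower bound, by an explicit family.  If all bits are 1, the phase  xs, xs^3, rev xs, (rev xs)^3
   (every item of the second and fourth block requested three times in a row) costs MTF2 exactly
   5 l^2 + 3 l and restores its list and bits, whereas serving it offline in place or by moving to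
   the front costs 2 l^2 + 6 l.  One request to each item with initial bit 0 makes all bits 1.
   Repeating the phase refutes every constant c < 5/2.  Since competitiveness is monotone in c,
   5/2 is the minimum of the competitive constants. *)

lemma pos_append: "pos x (xs @ ys) = (if x \<in> set xs then pos x xs else length xs + pos x ys)"
  by (induction xs) auto

lemma pos_less: "x \<in> set xs \<Longrightarrow> pos x xs < length xs"
  by (induction xs) auto

lemma nth_pos: "x \<in> set xs \<Longrightarrow> xs ! pos x xs = x"
  by (induction xs) auto

lemma pos_nth: "distinct xs \<Longrightarrow> i < length xs \<Longrightarrow> pos (xs ! i) xs = i"
  by (induction xs arbitrary: i) (auto simp: nth_Cons split: nat.splits)

lemma move_to_pos: "x \<in> set xs \<Longrightarrow> move_to (pos x xs) x xs = xs"
  by (induction xs) (auto simp: move_to_def)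

lemma move_to_0: "move_to 0 x xs = x # remove1 x xs"
  by (simp add: move_to_def)

definition bef :: "'a \<Rightarrow> 'a \<Rightarrow> 'a list \<Rightarrow> bool" where
  "bef x y L \<longleftrightarrow> pos x L < pos y L"

lemma bef_asym: "x \<in> set L \<Longrightarrow> y \<in> set L \<Longrightarrow> x \<noteq> y \<Longrightarrow> bef y x L \<longleftrightarrow> \<not> bef x y L"
  unfolding bef_def by (metis nth_pos linorder_neqE_nat not_less_iff_gr_or_eq)

lemma bef_insert: "x \<noteq> r \<Longrightarrow> y \<noteq> r \<Longrightarrow> bef x y (xs @ r # ys) = bef x y (xs @ ys)"
  unfolding bef_def using pos_less[of x xs] pos_less[of y xs] by (auto simp: pos_append)

lemma pos_count:
  assumes "distinct L" and "r \<in> set L"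
  shows "of_nat (pos r L) = (\<Sum>y\<in>set L - {r}. of_bool (bef y r L) :: 'b::comm_semiring_1)"
  using assms
proof (induction L)
  case Nil
  then show ?case by simp
next
  case (Cons z L)
  show ?case
  proof (cases "r = z")
    case True
    then have "set (z # L) - {r} = set L" and "\<forall>y\<in>set L. \<not> bef y r (z # L)"
      using Cons.prems by (auto simp: bef_def)
    then show ?thesis using True by simp
  next
    case False
    have split: "set (z # L) - {r} = insert z (set L - {r})" and z: "z \<notin> set L - {r}"
      using Cons.prems False by auto
    have "(\<Sum>y\<in>set L - {r}. of_bool (bef y r (z # L)) :: 'b) = (\<Sum>y\<in>set L - {r}. of_bool (bef y r L))"
      using Cons.prems False by (intro sum.cong) (auto simp: bef_def)
    then show ?thesis
      using Cons False z unfolding split by (simp add: bef_def)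
  qed
qed

lemma move_to_facts:
  assumes d: "distinct M" and r: "r \<in> set M" and q: "q \<le> pos r M"
  shows "distinct (move_to q r M)" and "set (move_to q r M) = set M"
    and "\<And>x y. x \<noteq> r \<Longrightarrow> y \<noteq> r \<Longrightarrow> bef x y (move_to q r M) = bef x y M"
    and "\<And>y. bef y r (move_to q r M) \<Longrightarrow> bef y r M"
proof -
  obtain as bs where M: "M = as @ r # bs" and ras: "r \<notin> set as"
    using split_list_first[OF r] by blast
  define R where "R = as @ bs"
  have rR: "r \<notin> set R" and dR: "distinct R" using d M by (auto simp: R_def)
  have mv: "move_to q r M = take q R @ r # drop q R"
    using M ras by (simp add: move_to_def remove1_append R_def)
  have setR: "set (take q R) \<union> set (drop q R) = set R"
    by (metis append_take_drop_id set_append)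
  then show "set (move_to q r M) = set M" unfolding mv using M by (auto simp: R_def)
  have "distinct (take q R @ drop q R)" using dR by simp
  then show "distinct (move_to q r M)" unfolding mv using rR setR by (simp del: append_take_drop_id) blast
  show "bef x y (move_to q r M) = bef x y M" if "x \<noteq> r" "y \<noteq> r" for x y
  proof -
    have "bef x y (move_to q r M) = bef x y R"
      unfolding mv using bef_insert[OF that, of "take q R" "drop q R"] by simp
    also have "\<dots> = bef x y M" unfolding M R_def using bef_insert[OF that] by simp
    finally show ?thesis .
  qed
  fix y assume b: "bef y r (move_to q r M)"
  have "y \<in> set (take q R)"
  proof (rule ccontr)
    assume "y \<notin> set (take q R)"
    moreover have "r \<notin> set (take q R)" using rR by (auto dest: in_set_takeD)
    ultimately show False using b unfolding mv bef_def by (auto simp: pos_append min_def split: if_splits)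
  qed
  moreover have "take q R = take q as" using q M ras by (simp add: R_def pos_append)
  ultimately have "y \<in> set as" by (auto dest: in_set_takeD)
  then show "bef y r M" unfolding bef_def M using ras by (simp add: pos_append pos_less)
qed

lemma swap_pos:
  assumes d: "distinct M" and i: "Suc i < length M" and x: "x \<in> set M"
  shows "pos x (swap i M) = (if pos x M = i then Suc i else if pos x M = Suc i then i else pos x M)"
proof -
  define k where "k = pos x M"
  define s where "s = (if k = i then Suc i else if k = Suc i then i else k)"
  have k: "k < length M" "M ! k = x" using x by (simp_all add: k_def pos_less nth_pos)
  have ds: "distinct (swap i M)" using d i by (simp add: swap_def distinct_swap)
  have "swap i M ! s = x" and "s < length (swap i M)"
    using k i by (auto simp: swap_def s_def nth_list_update)
  then have "pos x (swap i M) = s" using pos_nth[OF ds] by metis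
  then show ?thesis by (simp add: s_def k_def)
qed

lemma swap_facts:
  assumes d: "distinct M" and i: "Suc i < length M"
  shows "distinct (swap i M)" and "set (swap i M) = set M"
    and "\<And>x y. x \<in> set M \<Longrightarrow> y \<in> set M \<Longrightarrow> {x, y} \<noteq> {M ! i, M ! Suc i} \<Longrightarrow>
        bef x y (swap i M) = bef x y M"
proof -
  show "distinct (swap i M)" using d i by (simp add: swap_def distinct_swap)
  show "set (swap i M) = set M" using i by (simp add: swap_def set_swap)
  fix x y assume x: "x \<in> set M" and y: "y \<in> set M" and xy: "{x, y} \<noteq> {M ! i, M ! Suc i}"
  have "\<not> (pos x M = i \<and> pos y M = Suc i)" and "\<not> (pos x M = Suc i \<and> pos y M = i)"
    using xy x y nth_pos by (metis insert_commute)+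
  then show "bef x y (swap i M) = bef x y M"
    unfolding bef_def swap_pos[OF d i x] swap_pos[OF d i y] by auto
qed

section \<open>The potential function\<close>

text \<open>Weight of an ordered pair (x, y) of distinct items: the arguments are the bit of x, the
  bit of y, whether y precedes x in the MTF2 list, and whether y precedes x in the offline list.\<close>

fun D :: "bool \<Rightarrow> bool \<Rightarrow> bool \<Rightarrow> bool \<Rightarrow> int" where
  "D False False False False = 0"
| "D False False False True = 4"
| "D False False True False = 4"
| "D False False True True = 0"
| "D False True False False = 1"
| "D False True False True = 2"
| "D False True True False = 5"
| "D False True True True = 0"
| "D True False False False = 0"
| "D True False False True = 5"
| "D True False True False = 2"
| "D True False True True = 1"
| "D True True False False = 1"
| "D True True False True = 3"
| "D True True True False = 3"
| "D True True True True = 1"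

lemma D_range: "0 \<le> D a c u v" "D a c u v \<le> 5"
  by (cases a; cases c; cases u; cases v; simp)+

text \<open>When r is requested, its bit a flips, in the MTF2 list
  an item y stays before r only if r was not moved to the front (u' = (\<not> a \<and> u)), and in the
  offline list r only moves forward (v' \<longrightarrow> v).  Then the weights of the pairs (r, y) and (y, r)
  grow by at most 10 [y precedes r offline] - 4 [y precedes r for MTF2]; summing over y gives the
  amortized inequality, since the position of r counts the items before it.\<close>

lemma D_request:
  assumes "v' \<longrightarrow> v" and "u' = (\<not> a \<and> u)"
  shows "(D (\<not> a) c u' v' - D a c u v) + (D c (\<not> a) (\<not> u') (\<not> v') - D c a (\<not> u) (\<not> v))
    \<le> 10 * of_bool v - 4 * of_bool u"
  using assms by (cases a; cases c; cases u; cases v; cases v') auto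

definition pairs :: "'a set \<Rightarrow> ('a \<times> 'a) set" where
  "pairs S = {(x, y). x \<in> S \<and> y \<in> S \<and> x \<noteq> y}"

lemma finite_pairs: "finite S \<Longrightarrow> finite (pairs S)"
  by (rule finite_subset[of _ "S \<times> S"]) (auto simp: pairs_def)

definition T :: "('a \<Rightarrow> bool) \<Rightarrow> 'a list \<Rightarrow> 'a list \<Rightarrow> 'a \<times> 'a \<Rightarrow> int" where
  "T b L M = (\<lambda>(x, y). D (b x) (b y) (bef y x L) (bef y x M))"

lemma T_range: "0 \<le> T b L M p" "T b L M p \<le> 5"
  by (cases p; simp add: T_def D_range)+

definition Phi :: "('a \<Rightarrow> bool) \<Rightarrow> 'a list \<Rightarrow> 'a list \<Rightarrow> int" where
  "Phi b L M = (\<Sum>p\<in>pairs (set L). T b L M p)"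

lemma Phi_nonneg: "0 \<le> Phi b L M"
  unfolding Phi_def by (rule sum_nonneg) (rule T_range)

lemma Phi_le: "Phi b L M \<le> 5 * int (length L * length L)"
proof -
  have "Phi b L M \<le> of_nat (card (pairs (set L))) * 5"
    unfolding Phi_def by (rule sum_bounded_above) (rule T_range)
  moreover have "card (pairs (set L)) \<le> card (set L \<times> set L)"
    by (rule card_mono) (auto simp: pairs_def)
  moreover have "card (set L \<times> set L) \<le> length L * length L"
    by (simp add: card_cartesian_product card_length mult_le_mono)
  ultimately show ?thesis by linarith
qed

text \<open>A paid exchange changes the relative order of two ordered pairs only, each weighing at
  most 5.\<close>

lemma Phi_swap:
  assumes d: "distinct M" and sLM: "set L = set M" and i: "Suc i < length M"
  shows "Phi b L (swap i M) \<le> Phi b L M + 10"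
proof -
  define Q where "Q = {(M ! i, M ! Suc i), (M ! Suc i, M ! i)}"
  define \<Delta> where "\<Delta> p = T b L (swap i M) p - T b L M p" for p
  have fin: "finite (pairs (set L))" by (simp add: finite_pairs)
  have "Phi b L (swap i M) - Phi b L M = (\<Sum>p\<in>pairs (set L). \<Delta> p)"
    unfolding Phi_def \<Delta>_def by (simp add: sum_subtractf)
  also have "\<dots> = (\<Sum>p\<in>pairs (set L) \<inter> Q. \<Delta> p) + (\<Sum>p\<in>pairs (set L) - Q. \<Delta> p)"
    using fin by (rule sum.Int_Diff)
  also have "(\<Sum>p\<in>pairs (set L) - Q. \<Delta> p) = 0"
  proof (rule sum.neutral, rule ballI)
    fix p assume p: "p \<in> pairs (set L) - Q"
    obtain x y where pxy: "p = (x, y)" by (cases p)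
    have "y \<in> set M" "x \<in> set M" "{y, x} \<noteq> {M ! i, M ! Suc i}"
      using p sLM by (auto simp: pxy pairs_def Q_def doubleton_eq_iff)
    then have "bef y x (swap i M) = bef y x M" by (rule swap_facts(3)[OF d i])
    then show "\<Delta> p = 0" by (simp add: \<Delta>_def T_def pxy)
  qed
  also have "(\<Sum>p\<in>pairs (set L) \<inter> Q. \<Delta> p) \<le> of_nat (card (pairs (set L) \<inter> Q)) * 5"
    by (rule sum_bounded_above) (use T_range in \<open>smt (verit) \<Delta>_def\<close>)
  also have "card (pairs (set L) \<inter> Q) \<le> card Q"
    by (rule card_mono) (auto simp: Q_def)
  then have "of_nat (card (pairs (set L) \<inter> Q)) * 5 \<le> (10::int)"
    using card_insert_le_m1[of 2 "{(M ! Suc i, M ! i)}" "(M ! i, M ! Suc i)"]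
    by (simp add: Q_def)
  finally show ?thesis by linarith
qed

lemma Phi_paid:
  "paid M0 M k \<Longrightarrow> distinct M0 \<Longrightarrow> set L = set M0 \<Longrightarrow>
   distinct M \<and> set M = set M0 \<and> Phi b L M \<le> Phi b L M0 + 10 * int k"
proof (induction rule: paid.induct)
  case (paid_refl xs)
  then show ?case by simp
next
  case (paid_step xs ys k i)
  then have IH: "distinct ys" "set ys = set xs" "Phi b L ys \<le> Phi b L xs + 10 * int k" by auto
  have "Phi b L (swap i ys) \<le> Phi b L ys + 10"
    using Phi_swap[OF IH(1) _ paid_step.hyps(2)] IH(2) paid_step.prems by simp
  then show ?case using swap_facts[OF IH(1) paid_step.hyps(2)] IH by simp
qed

lemma Phi_change_at:
  assumes sL': "set L' = set L" and r: "r \<in> set L"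
    and unchanged: "\<And>x y. x \<noteq> r \<Longrightarrow> y \<noteq> r \<Longrightarrow> T b' L' M' (x, y) = T b L M (x, y)"
  shows "Phi b' L' M' - Phi b L M =
    (\<Sum>y\<in>set L - {r}. (T b' L' M' (r, y) - T b L M (r, y)) + (T b' L' M' (y, r) - T b L M (y, r)))"
proof -
  define S where "S = set L - {r}"
  define \<Delta> where "\<Delta> p = T b' L' M' p - T b L M p" for p
  define Q1 where "Q1 = (\<lambda>y. (r, y)) ` S"
  define Q2 where "Q2 = (\<lambda>y. (y, r)) ` S"
  have fin: "finite (pairs (set L))" by (simp add: finite_pairs)
  have Qsub: "Q1 \<union> Q2 \<subseteq> pairs (set L)" using r by (auto simp: Q1_def Q2_def pairs_def S_def)
  have "Phi b' L' M' - Phi b L M = (\<Sum>p\<in>pairs (set L). \<Delta> p)"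
    unfolding Phi_def \<Delta>_def sL' by (simp add: sum_subtractf)
  also have "\<dots> = (\<Sum>p\<in>Q1 \<union> Q2. \<Delta> p)"
  proof (rule sum.mono_neutral_right[OF fin Qsub], rule ballI)
    fix p assume "p \<in> pairs (set L) - (Q1 \<union> Q2)"
    then obtain x y where "p = (x, y)" "x \<noteq> r" "y \<noteq> r"
      by (cases p) (auto simp: pairs_def Q1_def Q2_def S_def)
    then show "\<Delta> p = 0" by (simp add: \<Delta>_def unchanged)
  qed
  also have "\<dots> = (\<Sum>p\<in>Q1. \<Delta> p) + (\<Sum>p\<in>Q2. \<Delta> p)"
    by (rule sum.union_disjoint) (auto simp: Q1_def Q2_def S_def)
  also have "\<dots> = (\<Sum>y\<in>S. \<Delta> (r, y)) + (\<Sum>y\<in>S. \<Delta> (y, r))"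
    unfolding Q1_def Q2_def by (subst sum.reindex; simp add: inj_on_def)+
  finally show ?thesis by (simp add: S_def \<Delta>_def sum.distrib)
qed

lemma Phi_request:
  assumes dL: "distinct L" and dM: "distinct M" and sLM: "set L = set M"
    and r: "r \<in> set M" and q: "q \<le> pos r M"
  shows "4 * int (pos r L + 1) + Phi (b(r := \<not> b r)) (if b r then move_to 0 r L else L) (move_to q r M)
    \<le> 10 * int (pos r M + 1) + Phi b L M"
proof -
  define b' where "b' = b(r := \<not> b r)"
  define L' where "L' = (if b r then move_to 0 r L else L)"
  define M' where "M' = move_to q r M"
  have rL: "r \<in> set L" using r sLM by simp
  note mvL = move_to_facts[OF dL rL, of 0] and mvM = move_to_facts[OF dM r q]
  have sL': "set L' = set L" using mvL by (simp add: L'_def)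
  have sM': "set M' = set L" using mvM sLM by (simp add: M'_def)
  have L'_other: "bef x y L' = bef x y L" if "x \<noteq> r" "y \<noteq> r" for x y
    using mvL that by (simp add: L'_def)
  have L'_r: "bef y r L' = (\<not> b r \<and> bef y r L)" for y
    by (auto simp: L'_def bef_def move_to_0)
  have M'_other: "bef x y M' = bef x y M" if "x \<noteq> r" "y \<noteq> r" for x y
    using mvM that by (simp add: M'_def)
  have M'_r: "bef y r M' \<longrightarrow> bef y r M" for y
    using mvM by (simp add: M'_def)
  define \<delta> where "\<delta> y = (T b' L' M' (r, y) - T b L M (r, y)) + (T b' L' M' (y, r) - T b L M (y, r))" for y
  have "Phi b' L' M' - Phi b L M = (\<Sum>y\<in>set L - {r}. \<delta> y)"
    unfolding \<delta>_def
    by (rule Phi_change_at[OF sL' rL]) (simp add: T_def b'_def L'_other M'_other)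
  also have "\<dots> \<le> (\<Sum>y\<in>set L - {r}. 10 * of_bool (bef y r M) - 4 * of_bool (bef y r L))"
  proof (rule sum_mono)
    fix y assume y: "y \<in> set L - {r}"
    have "bef r y X = (\<not> bef y r X)" if "set X = set L" for X
      using bef_asym[of y X r] y rL that by auto
    then have "\<delta> y = (D (\<not> b r) (b y) (\<not> b r \<and> bef y r L) (bef y r M') - D (b r) (b y) (bef y r L) (bef y r M))
        + (D (b y) (\<not> b r) (\<not> (\<not> b r \<and> bef y r L)) (\<not> bef y r M') - D (b y) (b r) (\<not> bef y r L) (\<not> bef y r M))"
      using y sL' sM' sLM by (simp add: \<delta>_def T_def b'_def L'_r)
    also have "\<dots> \<le> 10 * of_bool (bef y r M) - 4 * of_bool (bef y r L)"
      by (rule D_request) (simp_all add: M'_r)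
    finally show "\<delta> y \<le> 10 * of_bool (bef y r M) - 4 * of_bool (bef y r L)" .
  qed
  also have "\<dots> = 10 * int (pos r M) - 4 * int (pos r L)"
  proof -
    have "int (pos r L) = (\<Sum>y\<in>set L - {r}. of_bool (bef y r L))" by (rule pos_count[OF dL rL])
    moreover have "int (pos r M) = (\<Sum>y\<in>set L - {r}. of_bool (bef y r M))"
      unfolding sLM by (rule pos_count[OF dM r])
    ultimately show ?thesis by (simp only: sum_subtractf sum_distrib_left)
  qed
  finally show ?thesis by (simp add: b'_def L'_def M'_def)
qed

lemma mtf2_amortized:
  "offline M rs c \<Longrightarrow> distinct L \<Longrightarrow> distinct M \<Longrightarrow> set L = set M \<Longrightarrow>
   4 * int (mtf2_cost b L rs) \<le> 10 * int c + Phi b L M"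
proof (induction M rs c arbitrary: b L rule: offline.induct)
  case (off_nil xs)
  then show ?case using Phi_nonneg[of b L xs] by simp
next
  case (off_cons xs ys k r q rs c)
  have ys: "distinct ys" "set L = set ys" "Phi b L ys \<le> Phi b L xs + 10 * int k"
    using Phi_paid[OF off_cons.hyps(1) off_cons.prems(2)] off_cons.prems(3) by auto
  define L' where "L' = (if b r then move_to 0 r L else L)"
  have rL: "r \<in> set L" using ys off_cons.hyps(2) by simp
  have "distinct L'" "set L' = set L"
    using move_to_facts[OF off_cons.prems(1) rL, of 0] off_cons.prems(1) by (auto simp: L'_def)
  moreover have "distinct (move_to q r ys)" "set (move_to q r ys) = set ys"
    using move_to_facts[OF ys(1) off_cons.hyps(2,3)] by auto
  ultimately have IH: "4 * int (mtf2_cost (b(r := \<not> b r)) L' rs) \<le> 10 * int c + Phi (b(r := \<not> b r)) L' (move_to q r ys)"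
    using off_cons.IH ys(2) by simp
  have "mtf2_cost b L (r # rs) = pos r L + 1 + mtf2_cost (b(r := \<not> b r)) L' rs"
    by (simp add: L'_def)
  then show ?case
    using IH Phi_request[OF off_cons.prems(1) ys(1,2) off_cons.hyps(2,3), of b] ys(3)
    unfolding L'_def by simp
qed

lemma offline_step:
  "r \<in> set ys \<Longrightarrow> q \<le> pos r ys \<Longrightarrow> offline (move_to q r ys) rs c \<Longrightarrow> d = pos r ys + 1 + c \<Longrightarrow>
   offline ys (r # rs) d"
  using off_cons[OF paid_refl, of r ys q rs c] by simp

lemma offline_in_place:
  "offline L rest c \<Longrightarrow> set zs \<subseteq> set L \<Longrightarrow> offline L (zs @ rest) (c + (\<Sum>y\<leftarrow>zs. pos y L + 1))"
proof (induction zs)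
  case Nil
  then show ?case by simp
next
  case (Cons z zs)
  then have "z \<in> set L" and "offline L (zs @ rest) (c + (\<Sum>y\<leftarrow>zs. pos y L + 1))" by auto
  then show ?case unfolding append_Cons
    by (intro offline_step[where q = "pos z L" and c = "c + (\<Sum>y\<leftarrow>zs. pos y L + 1)"])
      (simp_all add: move_to_pos)
qed

text \<open>Every request sequence over the items can be served, so OPT is attained.\<close>

lemma offline_OPT: "set rs \<subseteq> set xs \<Longrightarrow> offline xs rs (OPT xs rs)"
proof -
  assume "set rs \<subseteq> set xs"
  then have "offline xs rs (0 + (\<Sum>y\<leftarrow>rs. pos y xs + 1))"
    using offline_in_place[OF off_nil, of rs] by simp
  then have "Inf {c. offline xs rs c} \<in> {c. offline xs rs c}" by (intro Inf_nat_def1) blast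
  then show ?thesis by (simp add: OPT_def)
qed

lemma OPT_le: "offline xs rs c \<Longrightarrow> OPT xs rs \<le> c"
  unfolding OPT_def by (rule cInf_lower) auto

section \<open>Upper bound\<close>

theorem mtf2_upper_bound:
  assumes "distinct xs" and "set rs \<subseteq> set xs"
  shows "4 * real (MTF2 init xs rs) \<le> 10 * real (OPT xs rs) + 5 * real (length xs * length xs)"
proof -
  have "4 * int (mtf2_cost (init xs) xs rs) \<le> 10 * int (OPT xs rs) + Phi (init xs) xs xs"
    using mtf2_amortized[OF offline_OPT[OF assms(2)] assms(1) assms(1)] by simp
  also have "Phi (init xs) xs xs \<le> 5 * int (length xs * length xs)" by (rule Phi_le)
  finally have "4 * int (MTF2 init xs rs) \<le> 10 * int (OPT xs rs) + 5 * int (length xs * length xs)"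
    by (simp add: MTF2_def)
  then show ?thesis by linarith
qed

lemma competitive_mtf2: "competitive (MTF2 init) (5 / 2)"
  unfolding competitive_def
proof
  fix l
  have "real (MTF2 init xs rs) \<le> 5 / 2 * real (OPT xs rs) + 5 / 4 * real (l * l)"
    if "distinct xs \<and> length xs = l \<and> set rs \<subseteq> set xs" for xs rs
    using mtf2_upper_bound[of xs rs init] that by simp
  then show "\<exists>b. \<forall>xs rs. distinct xs \<and> length xs = l \<and> set rs \<subseteq> set xs \<longrightarrow>
      real (MTF2 init xs rs) \<le> 5 / 2 * real (OPT xs rs) + b" by blast
qed

text \<open>Since OPT is nonnegative, every constant above a competitive one is competitive.\<close>

lemma competitive_mono:
  assumes "competitive A c" and "c \<le> c'"
  shows "competitive A c'"
  unfolding competitive_def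
proof
  fix l
  obtain b :: real where b: "\<forall>xs rs. distinct xs \<and> length xs = l \<and> set rs \<subseteq> set xs \<longrightarrow>
      real (A xs rs) \<le> c * real (OPT xs rs) + b"
    using assms(1) unfolding competitive_def by blast
  have "c * real (OPT xs rs) \<le> c' * real (OPT xs rs)" for xs rs
    using assms(2) by (simp add: mult_right_mono)
  then show "\<exists>b. \<forall>xs rs. distinct xs \<and> length xs = l \<and> set rs \<subseteq> set xs \<longrightarrow>
      real (A xs rs) \<le> c' * real (OPT xs rs) + b"
    using b by (metis add_right_mono order_trans)
qed

section \<open>Lower bound\<close>

definition triple :: "'a list \<Rightarrow> 'a list" where
  "triple zs = concat (map (\<lambda>z. [z, z, z]) zs)"

lemma triple_simps [simp]: "triple [] = []" "triple (z # zs) = z # z # z # triple zs"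
  by (simp_all add: triple_def)

lemma set_triple [simp]: "set (triple zs) = set zs"
  by (induction zs) auto

lemma mtf2_scan_ones:
  "distinct (a @ zs) \<Longrightarrow> \<forall>z\<in>set zs. b z \<Longrightarrow>
   mtf2_cost b (a @ zs) (zs @ rest) = (\<Sum>k<length zs. length a + k + 1)
     + mtf2_cost (\<lambda>x. if x \<in> set zs then False else b x) (rev zs @ a) rest"
proof (induction zs arbitrary: a b)
  case Nil
  then show ?case by simp
next
  case (Cons z zs)
  have z: "z \<notin> set a" "z \<notin> set zs" "b z" using Cons.prems by auto
  have bits: "(\<lambda>x. if x \<in> set zs then False else (b(z := False)) x) = (\<lambda>x. if x \<in> set (z # zs) then False else b x)"
    by auto
  have "mtf2_cost b (a @ z # zs) ((z # zs) @ rest) = length a + 1 + mtf2_cost (b(z := False)) ((z # a) @ zs) (zs @ rest)"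
    using z by (simp add: pos_append move_to_0 remove1_append)
  also have "\<dots> = (\<Sum>k<length (z # zs). length a + k + 1)
     + mtf2_cost (\<lambda>x. if x \<in> set (z # zs) then False else b x) (rev (z # zs) @ a) rest"
  proof -
    have "mtf2_cost (b(z := False)) ((z # a) @ zs) (zs @ rest) = (\<Sum>k<length zs. length (z # a) + k + 1)
        + mtf2_cost (\<lambda>x. if x \<in> set zs then False else (b(z := False)) x) (rev zs @ (z # a)) rest"
      using Cons.prems z by (intro Cons.IH) auto
    then show ?thesis unfolding bits by (simp add: sum.lessThan_Suc_shift del: sum.lessThan_Suc)
  qed
  finally show ?case by simp
qed

text \<open>Requesting each of the items zs, whose bits are 0, three times in a row: the first access
  sets the bit, the second moves the item to the front, the third finds it there.\<close>

lemma mtf2_scan_triples: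
  "distinct (d @ rev zs) \<Longrightarrow> \<forall>z\<in>set zs. \<not> b z \<Longrightarrow>
   mtf2_cost b (d @ rev zs) (triple zs @ rest) = length zs * (2 * (length d + length zs) + 1)
     + mtf2_cost (\<lambda>x. if x \<in> set zs then True else b x) (rev zs @ d) rest"
proof (induction zs arbitrary: d b)
  case Nil
  then show ?case by simp
next
  case (Cons z zs)
  have z: "z \<notin> set d" "z \<notin> set zs" "\<not> b z" using Cons.prems by auto
  have bits: "(\<lambda>x. if x \<in> set zs then True else (b(z := True)) x) = (\<lambda>x. if x \<in> set (z # zs) then True else b x)"
    by auto
  have "mtf2_cost b (d @ rev (z # zs)) (triple (z # zs) @ rest) =
     2 * (length d + length zs) + 3 + mtf2_cost (b(z := True)) ((z # d) @ rev zs) (triple zs @ rest)"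
    using z by (simp add: pos_append move_to_0 remove1_append)
  also have "\<dots> = length (z # zs) * (2 * (length d + length (z # zs)) + 1)
     + mtf2_cost (\<lambda>x. if x \<in> set (z # zs) then True else b x) (rev (z # zs) @ d) rest"
  proof -
    have "mtf2_cost (b(z := True)) ((z # d) @ rev zs) (triple zs @ rest) = length zs * (2 * (length (z # d) + length zs) + 1)
        + mtf2_cost (\<lambda>x. if x \<in> set zs then True else (b(z := True)) x) (rev zs @ (z # d)) rest"
      using Cons.prems z by (intro Cons.IH) auto
    then show ?thesis unfolding bits by simp
  qed
  finally show ?case .
qed

text \<open>Requests that turn bits from 0 to 1 move nothing, so dropping them can only lower the
  cost of MTF2.\<close>

lemma mtf2_set_bits:
  "distinct zs \<Longrightarrow> \<forall>z\<in>set zs. \<not> b z \<Longrightarrow>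
   mtf2_cost (\<lambda>x. if x \<in> set zs then True else b x) L rest \<le> mtf2_cost b L (zs @ rest)"
proof (induction zs arbitrary: b)
  case Nil
  then show ?case by simp
next
  case (Cons z zs)
  have bits: "(\<lambda>x. if x \<in> set zs then True else (b(z := True)) x) = (\<lambda>x. if x \<in> set (z # zs) then True else b x)"
    by auto
  have "mtf2_cost b L ((z # zs) @ rest) = pos z L + 1 + mtf2_cost (b(z := True)) L (zs @ rest)"
    using Cons.prems by simp
  moreover have "mtf2_cost (\<lambda>x. if x \<in> set zs then True else (b(z := True)) x) L rest
      \<le> mtf2_cost (b(z := True)) L (zs @ rest)"
    using Cons.prems by (intro Cons.IH) auto
  ultimately show ?case unfolding bits by simp
qed

lemma sum_pos_suffix:
  "distinct (a @ zs) \<Longrightarrow> (\<Sum>y\<leftarrow>zs. pos y (a @ zs) + 1) = (\<Sum>k<length zs. length a + k + 1)"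
proof (induction zs arbitrary: a)
  case Nil
  then show ?case by simp
next
  case (Cons z zs)
  have "(\<Sum>y\<leftarrow>zs. pos y ((a @ [z]) @ zs) + 1) = (\<Sum>k<length zs. length (a @ [z]) + k + 1)"
    using Cons.prems by (intro Cons.IH) auto
  then show ?case using Cons.prems
    by (simp add: pos_append sum.lessThan_Suc_shift del: sum.lessThan_Suc)
qed

text \<open>Offline, the triples are served by moving each item to the front at its first access.\<close>

lemma offline_triples:
  "offline (rev zs @ a) rest c \<Longrightarrow> distinct (a @ zs) \<Longrightarrow>
   offline (a @ zs) (triple zs @ rest) (c + (\<Sum>k<length zs. length a + k + 3))"
proof (induction zs arbitrary: a c)
  case Nil
  then show ?case by simp
next
  case (Cons z zs)
  define c' where "c' = c + (\<Sum>k<length zs. length (z # a) + k + 3)"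
  have z: "z \<notin> set a" "z \<notin> set zs" using Cons.prems by auto
  have s3: "offline ((z # a) @ zs) (triple zs @ rest) c'"
    using Cons.prems unfolding c'_def by (intro Cons.IH) auto
  have s2: "offline ((z # a) @ zs) (z # triple zs @ rest) (1 + c')"
    by (rule offline_step[where q = 0 and c = c']) (use s3 in \<open>simp_all add: move_to_0\<close>)
  have s1: "offline ((z # a) @ zs) (z # z # triple zs @ rest) (2 + c')"
    by (rule offline_step[where q = 0 and c = "1 + c'"]) (use s2 in \<open>simp_all add: move_to_0\<close>)
  have "offline (a @ z # zs) (z # z # z # triple zs @ rest) (length a + 3 + c')"
    by (rule offline_step[where q = 0 and c = "2 + c'"])
      (use z s1 in \<open>simp_all add: pos_append move_to_0 remove1_append\<close>)
  moreover have "length a + 3 + c' = c + (\<Sum>k<length (z # zs). length a + k + 3)"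
    by (simp add: c'_def sum.lessThan_Suc_shift algebra_simps del: sum.lessThan_Suc)
  ultimately show ?case by simp
qed

definition phase :: "'a list \<Rightarrow> 'a list" where
  "phase xs = xs @ triple xs @ rev xs @ triple (rev xs)"

lemma sum_upto: "2 * (\<Sum>k<l. k + 1) = l * (l + 1::nat)"
  by (induction l) (auto simp: algebra_simps)

lemma mtf2_phase:
  assumes d: "distinct xs" and ones: "\<forall>x\<in>set xs. b x"
  shows "mtf2_cost b xs (phase xs @ rest) = 5 * length xs * length xs + 3 * length xs + mtf2_cost b xs rest"
proof -
  define l where "l = length xs"
  define zeros where "zeros = (\<lambda>x. if x \<in> set xs then False else b x)"
  define ones' where "ones' = (\<lambda>x. if x \<in> set xs then True else zeros x)"
  have restored: "(\<lambda>x. if x \<in> set xs then True else zeros x) = b" using ones by (auto simp: zeros_def)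
  have "mtf2_cost b xs (xs @ triple xs @ rev xs @ triple (rev xs) @ rest) =
      (\<Sum>k<l. k + 1) + mtf2_cost zeros (rev xs) (triple xs @ rev xs @ triple (rev xs) @ rest)"
    using mtf2_scan_ones[of "[]" xs b] d ones by (simp add: zeros_def l_def)
  also have "mtf2_cost zeros (rev xs) (triple xs @ rev xs @ triple (rev xs) @ rest) =
      l * (2 * l + 1) + mtf2_cost ones' (rev xs) (rev xs @ triple (rev xs) @ rest)"
    using mtf2_scan_triples[of "[]" xs zeros] d by (simp add: zeros_def ones'_def l_def)
  also have "mtf2_cost ones' (rev xs) (rev xs @ triple (rev xs) @ rest) =
      (\<Sum>k<l. k + 1) + mtf2_cost zeros xs (triple (rev xs) @ rest)"
    using mtf2_scan_ones[of "[]" "rev xs" ones'] d by (simp add: zeros_def ones'_def l_def)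
  also have "mtf2_cost zeros xs (triple (rev xs) @ rest) = l * (2 * l + 1) + mtf2_cost b xs rest"
    using mtf2_scan_triples[of "[]" "rev xs" zeros] d restored by (simp add: zeros_def l_def)
  finally show ?thesis
    using sum_upto[of l] by (simp add: phase_def l_def algebra_simps)
qed

lemma offline_phase:
  assumes o: "offline xs rest c" and d: "distinct xs"
  shows "offline xs (phase xs @ rest) (c + 2 * length xs * length xs + 6 * length xs)"
proof -
  define l where "l = length xs"
  have h4: "offline (rev xs) (triple (rev xs) @ rest) (c + (\<Sum>k<l. k + 3))"
    using offline_triples[of "rev xs" "[]" rest c] o d by (simp add: l_def)
  have h3: "offline (rev xs) (rev xs @ triple (rev xs) @ rest) (c + (\<Sum>k<l. k + 3) + (\<Sum>k<l. k + 1))"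
    using offline_in_place[OF h4, of "rev xs"] sum_pos_suffix[of "[]" "rev xs"] d by (simp add: l_def)
  have h2: "offline xs (triple xs @ rev xs @ triple (rev xs) @ rest)
      (c + (\<Sum>k<l. k + 3) + (\<Sum>k<l. k + 1) + (\<Sum>k<l. k + 3))"
    using offline_triples[of xs "[]"] h3 d by (simp add: l_def)
  have h1: "offline xs (phase xs @ rest)
      (c + (\<Sum>k<l. k + 3) + (\<Sum>k<l. k + 1) + (\<Sum>k<l. k + 3) + (\<Sum>k<l. k + 1))"
    using offline_in_place[OF h2, of xs] sum_pos_suffix[of "[]" xs] d by (simp add: phase_def l_def)
  have "(\<Sum>k<l. k + 3) = (\<Sum>k<l. k + 1) + 2 * l" by (induction l) auto
  then have "(\<Sum>k<l. k + 3) + (\<Sum>k<l. k + 1) + (\<Sum>k<l. k + 3) + (\<Sum>k<l. k + 1) = 2 * l * l + 6 * l"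
    using sum_upto[of l] by (simp add: algebra_simps)
  then show ?thesis using h1 by (simp add: l_def add.assoc)
qed

lemma mtf2_phases:
  "distinct xs \<Longrightarrow> \<forall>x\<in>set xs. b x \<Longrightarrow>
   mtf2_cost b xs (concat (replicate m (phase xs))) = m * (5 * length xs * length xs + 3 * length xs)"
  by (induction m) (simp_all add: mtf2_phase)

lemma offline_phases:
  "distinct xs \<Longrightarrow> offline xs (concat (replicate m (phase xs))) (m * (2 * length xs * length xs + 6 * length xs))"
proof (induction m)
  case 0
  then show ?case by (simp add: off_nil)
next
  case (Suc m)
  then show ?case using offline_phase[OF Suc.IH[OF Suc.prems] Suc.prems] by (simp add: algebra_simps)
qed

theorem mtf2_lower_bound_family:
  fixes init :: "nat list \<Rightarrow> nat \<Rightarrow> bool"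
  shows "\<exists>xs rs. distinct xs \<and> length xs = l \<and> set rs \<subseteq> set xs
    \<and> m * (5 * l * l + 3 * l) \<le> MTF2 init xs rs \<and> OPT xs rs \<le> m * (2 * l * l + 6 * l) + l * l"
proof -
  define xs where "xs = [0..<l]"
  define zs where "zs = filter (\<lambda>z. \<not> init xs z) xs"
  define rs where "rs = zs @ concat (replicate m (phase xs))"
  have d: "distinct xs" and l: "length xs = l" by (simp_all add: xs_def)
  have "set rs \<subseteq> set xs" by (auto simp: rs_def zs_def phase_def)
  moreover have "m * (5 * l * l + 3 * l) \<le> MTF2 init xs rs"
  proof -
    let ?ones = "\<lambda>x. if x \<in> set zs then True else init xs x"
    have "m * (5 * l * l + 3 * l) = mtf2_cost ?ones xs (concat (replicate m (phase xs)))"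
      using mtf2_phases[OF d, of ?ones m] l by (auto simp: zs_def)
    also have "\<dots> \<le> MTF2 init xs rs"
      unfolding rs_def MTF2_def by (rule mtf2_set_bits) (auto simp: zs_def d)
    finally show ?thesis .
  qed
  moreover have "OPT xs rs \<le> m * (2 * l * l + 6 * l) + l * l"
  proof -
    have "offline xs rs (m * (2 * l * l + 6 * l) + (\<Sum>y\<leftarrow>zs. pos y xs + 1))"
      unfolding rs_def using offline_in_place[OF offline_phases[OF d, of m], of zs] l
      by (auto simp: zs_def)
    moreover have "(\<Sum>y\<leftarrow>zs. pos y xs + 1) \<le> (\<Sum>y\<leftarrow>zs. l)"
      by (rule sum_list_mono) (auto simp: zs_def l[symmetric] Suc_le_eq pos_less)
    moreover have "(\<Sum>y\<leftarrow>zs. l) \<le> l * l"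
      using length_filter_le[of _ xs] l by (simp add: sum_list_triv zs_def)
    ultimately show ?thesis using OPT_le by (meson add_left_mono order_trans)
  qed
  ultimately show ?thesis using d l by blast
qed

lemma not_competitive_by_family:
  fixes s t e :: nat and c :: real
  assumes c: "0 \<le> c" and gap: "c * t < s"
    and family: "\<And>m. \<exists>xs rs. distinct xs \<and> length xs = l \<and> set rs \<subseteq> set xs
      \<and> m * s \<le> A xs rs \<and> OPT xs rs \<le> m * t + e"
  shows "\<not> competitive A c"
proof
  assume "competitive A c"
  then obtain b :: real where b: "\<And>xs rs. distinct xs \<and> length xs = l \<and> set rs \<subseteq> set xs \<Longrightarrow>
      real (A xs rs) \<le> c * real (OPT xs rs) + b"
    unfolding competitive_def by blast
  obtain m :: nat where m: "(c * e + b) / (s - c * t) < m" using reals_Archimedean2 by blast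
  obtain xs rs where xs: "distinct xs \<and> length xs = l \<and> set rs \<subseteq> set xs"
    and A: "m * s \<le> A xs rs" and O: "OPT xs rs \<le> m * t + e"
    using family by blast
  have "real m * s \<le> real (A xs rs)" using A by (metis of_nat_le_iff of_nat_mult)
  also have "\<dots> \<le> c * real (OPT xs rs) + b" using b xs by blast
  also have "\<dots> \<le> c * (real m * t + e) + b"
    using O c by (intro add_right_mono mult_left_mono) (simp_all, metis of_nat_le_iff of_nat_add of_nat_mult)
  finally have "real m * (s - c * t) \<le> c * e + b" by (simp add: algebra_simps)
  then show False using m gap by (simp add: divide_less_eq mult.commute)
qed

lemma phase_gap:
  assumes "0 \<le> c" and "c < 5 / 2"
  shows "\<exists>l::nat. c * real (2 * l * l + 6 * l) < real (5 * l * l + 3 * l)"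
proof -
  obtain l :: nat where l: "6 * c / (5 - 2 * c) < l" using reals_Archimedean2 by blast
  have "0 \<le> 6 * c / (5 - 2 * c)" using assms by simp
  then have "0 < real l" using l by linarith
  moreover have "6 * c < l * (5 - 2 * c)" using l assms by (simp add: divide_less_eq)
  ultimately
  have "0 < real l * (real l * (5 - 2 * c) + 3 - 6 * c)" by simp
  then show ?thesis by (intro exI[of _ l]) (simp add: algebra_simps)
qed

theorem theorem7:
  fixes init :: "nat list \<Rightarrow> nat \<Rightarrow> bool"
  shows "competitive_ratio (MTF2 init) = 5 / 2"
  unfolding competitive_ratio_def
proof (rule cInf_eq_minimum)
  show "5 / 2 \<in> {c. competitive (MTF2 init) c}" using competitive_mtf2 by simp
  fix c assume "c \<in> {c. competitive (MTF2 init) c}"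
  then have comp: "competitive (MTF2 init) (max c 0)" by (simp add: competitive_mono)
  show "5 / 2 \<le> c"
  proof (rule ccontr)
    assume "\<not> 5 / 2 \<le> c"
    then have "max c 0 < 5 / 2" by simp
    then obtain l :: nat where gap: "max c 0 * real (2 * l * l + 6 * l) < real (5 * l * l + 3 * l)"
      using phase_gap[of "max c 0"] by auto
    have "\<not> competitive (MTF2 init) (max c 0)"
      by (rule not_competitive_by_family[OF _ gap mtf2_lower_bound_family]) simp
    then show False using comp by contradiction
  qed
qed

end
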